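(* Let $(V,g)$ be a $4$-dimensional oriented Euclidean vector space and let $R \in \operatorname{Sym}^2_B(\Lambda^2 V)$ be Einstein. Denote by $R_\pm$ the restriction of $R$ to $\Lambda^\pm V$ and by $L_\pm$ the orthogonal projection of $L \in \Lambda^2 V$ onto $\Lambda^\pm V$. Then $$ |LR|^2 = |L_+ R_+|^2 + |L_- R_-|^2 \quad \text{for all } L \in \Lambda^2 V. $$ In particular, suppose $e_1,\ldots,e_4$ is an oriented orthonormal basis of $V$ such that the orthonormal basis $\Xi_1 = \frac{1}{\sqrt 2}(e_1\wedge e_2 + e_3 \wedge e_4)$, $\Xi_2 = \frac{1}{\sqrt 2}(e_1\wedge e_3 - e_2 \wedge e_4)$, $\Xi_3 = \frac{1}{\sqrt 2}(e_1\wedge e_4 + e_2 \wedge e_3)$ of $\Lambda^+ V$ and $\Xi_4 = \frac{1}{\sqrt 2}(e_1\wedge e_2 - e_3 \wedge e_4)$, $\Xi_5 = \frac{1}{\sqrt 2}(e_1\wedge e_3 + e_2 \wedge e_4)$, $\Xi_6 = \frac{1}{\sqrt 2}(e_1\wedge e_4 - e_2 \wedge e_3)$ of $\Lambda^- V$ diagonalizes $R$, with $R(\Xi_\alpha,\cdot) = \lambda_\alpha g(\Xi_\alpha,\cdot)$. If $L = \sum_{\alpha=1}^6 a_\alpha \Xi_\alpha$, then $$ |LR|^2 = 4 \sum_{\gamma=1}^6 a_\gamma^2 (\lambda_\alpha - \lambda_\beta)^2 \leq 4(\lambda_{\max} - \lambda_{\min})^2 |L|^2, $$ where for each $\gamma$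 the indices $\alpha < \beta$ are such that $\{\alpha,\beta,\gamma\} = \{1,2,3\}$ or $\{4,5,6\}$.
   Context: $\mathfrak{so}(V)$ is identified with $\Lambda^2 V$ via $(X \wedge Y)(Z) = g(X,Z)Y - g(Y,Z)X$; $\Lambda^2 V$ has the inner product making $\{e_i\wedge e_j\}_{i<j}$ orthonormal. $\operatorname{Sym}^2_B(\Lambda^2 V)$ is the space of symmetric bilinear forms $R$ on $\Lambda^2 V$ whose associated tensor $\operatorname{Rm}(x,y,z,w) = R(x\wedge y, z\wedge w)$ satisfies the first Bianchi identity; $R$ is Einstein if $\operatorname{Ric}(Y,W) = \sum_i \operatorname{Rm}(Y,e_i,W,e_i)$ is a multiple of $g$. $\Lambda^\pm V$ are the $\pm 1$ eigenspaces of the Hodge star. $L$ acts on $\Lambda^2 V$ by $L(x\wedge y) = Lx\wedge y + x\wedge Ly$ (this preserves $\Lambda^\pm V$ for $L \in \Lambda^\pm V$), and on symmetric bilinear forms $S$ on $\Lambda^2 V$ (or on $\Lambda^\pm V$) by $(LS)(\xi,\eta) = -S(L\xi,\eta) - S(\xi,L\eta)$; norms of such forms are $|S|^2 = \sum_{\alpha,\beta} S(\Xi_\alpha,\Xi_\beta)^2$ over an orthonormal basis, and $\lambda_{\max},\lambda_{\min}$ are the largest and smallest eigenvalues of $R$. *)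

theory Defs
  imports "HOL-Analysis.Analysis"
begin

text \<open>Model: V = real^4 with the standard inner product g = (\<bullet>) and the standard
orientation (an ordered basis is positive iff the determinant of the matrix whose rows are the
basis vectors is positive).  Lambda^2 V is identified with so(V), i.e. skew-symmetric 4x4
matrices acting on V, via (X wedge Y)(Z) = g(X,Z) Y - g(Y,Z) X.\<close>

type_synonym vec4 = "real^4"
type_synonym bivec = "real^4^4"

definition wedge :: "vec4 \<Rightarrow> vec4 \<Rightarrow> bivec" where
  "wedge X Y = (\<chi> i j. Y$i * X$j - X$i * Y$j)"

lemma wedge_apply: "wedge X Y *v Z = (X \<bullet> Z) *\<^sub>R Y - (Y \<bullet> Z) *\<^sub>R X"
  unfolding wedge_def
  by (simp add: vec_eq_iff matrix_vector_mult_def inner_vec_def sum_subtractf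
      sum_distrib_left sum_distrib_right algebra_simps)

definition Lambda2 :: "bivec set" where
  "Lambda2 = {A. transpose A = - A}"

text \<open>Inner product on Lambda^2 V making {e_i wedge e_j}_{i<j} orthonormal.\<close>
definition bv_inner :: "bivec \<Rightarrow> bivec \<Rightarrow> real" where
  "bv_inner A B = (1/2) * (\<Sum>i\<in>UNIV. \<Sum>j\<in>UNIV. A$i$j * B$i$j)"

text \<open>Standard basis e_1,...,e_4 (e_4 is the element 4 = 0 of the type 4).\<close>
definition std_e :: "4 \<Rightarrow> vec4" where
  "std_e i = axis i 1"

definition levi :: "4 \<Rightarrow> 4 \<Rightarrow> 4 \<Rightarrow> 4 \<Rightarrow> real" where
  "levi i j k l = det (\<chi> r. std_e (if r = 1 then i else if r = 2 then j else if r = 3 then k else l))"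

text \<open>Hodge star on Lambda^2 V (so that *(e_1 wedge e_2) = e_3 wedge e_4 for the positive
orthonormal basis e).\<close>
definition hodge :: "bivec \<Rightarrow> bivec" where
  "hodge A = (\<chi> i j. (1/2) * (\<Sum>k\<in>UNIV. \<Sum>l\<in>UNIV. levi i j k l * A$k$l))"

definition LambdaP :: "bivec set" where
  "LambdaP = {A \<in> Lambda2. hodge A = A}"

definition LambdaM :: "bivec set" where
  "LambdaM = {A \<in> Lambda2. hodge A = - A}"

definition projP :: "bivec \<Rightarrow> bivec" where
  "projP L = (1/2) *\<^sub>R (L + hodge L)"

definition projM :: "bivec \<Rightarrow> bivec" where
  "projM L = (1/2) *\<^sub>R (L - hodge L)"

text \<open>Action of L on Lambda^2 V: the linear extension of
L(x wedge y) = Lx wedge y + x wedge Ly, which is the commutator (see act_wedge).\<close>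
definition act :: "bivec \<Rightarrow> bivec \<Rightarrow> bivec" where
  "act L A = L ** A - A ** L"

definition form_act :: "bivec \<Rightarrow> (bivec \<Rightarrow> bivec \<Rightarrow> real) \<Rightarrow> (bivec \<Rightarrow> bivec \<Rightarrow> real)" where
  "form_act L S = (\<lambda>\<xi> \<eta>. - S (act L \<xi>) \<eta> - S \<xi> (act L \<eta>))"

definition form_normsq :: "bivec list \<Rightarrow> (bivec \<Rightarrow> bivec \<Rightarrow> real) \<Rightarrow> real" where
  "form_normsq B S = (\<Sum>a\<leftarrow>B. \<Sum>b\<leftarrow>B. (S a b)^2)"

definition Xi :: "(4 \<Rightarrow> vec4) \<Rightarrow> nat \<Rightarrow> bivec" where
  "Xi e \<alpha> = (1 / sqrt 2) *\<^sub>R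
     (if \<alpha> = 1 then wedge (e 1) (e 2) + wedge (e 3) (e 4)
      else if \<alpha> = 2 then wedge (e 1) (e 3) - wedge (e 2) (e 4)
      else if \<alpha> = 3 then wedge (e 1) (e 4) + wedge (e 2) (e 3)
      else if \<alpha> = 4 then wedge (e 1) (e 2) - wedge (e 3) (e 4)
      else if \<alpha> = 5 then wedge (e 1) (e 3) + wedge (e 2) (e 4)
      else wedge (e 1) (e 4) - wedge (e 2) (e 3))"

definition basis2 :: "bivec list" where
  "basis2 = [wedge (std_e 1) (std_e 2), wedge (std_e 1) (std_e 3), wedge (std_e 1) (std_e 4),
             wedge (std_e 2) (std_e 3), wedge (std_e 2) (std_e 4), wedge (std_e 3) (std_e 4)]"

definition basisP :: "bivec list" where
  "basisP = [Xi std_e 1, Xi std_e 2, Xi std_e 3]"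

definition basisM :: "bivec list" where
  "basisM = [Xi std_e 4, Xi std_e 5, Xi std_e 6]"

definition Rm :: "(bivec \<Rightarrow> bivec \<Rightarrow> real) \<Rightarrow> vec4 \<Rightarrow> vec4 \<Rightarrow> vec4 \<Rightarrow> vec4 \<Rightarrow> real" where
  "Rm R x y z w = R (wedge x y) (wedge z w)"

definition SymB :: "(bivec \<Rightarrow> bivec \<Rightarrow> real) \<Rightarrow> bool" where
  "SymB R \<longleftrightarrow> bilinear R \<and> (\<forall>A B. R A B = R B A) \<and>
     (\<forall>x y z w. Rm R x y z w + Rm R y z x w + Rm R z x y w = 0)"

definition Ric :: "(bivec \<Rightarrow> bivec \<Rightarrow> real) \<Rightarrow> vec4 \<Rightarrow> vec4 \<Rightarrow> real" where
  "Ric R Y W = (\<Sum>i\<in>UNIV. Rm R Y (std_e i) W (std_e i))"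

definition Einstein :: "(bivec \<Rightarrow> bivec \<Rightarrow> real) \<Rightarrow> bool" where
  "Einstein R \<longleftrightarrow> (\<exists>c. \<forall>Y W. Ric R Y W = c * (Y \<bullet> W))"

definition eigvals :: "(bivec \<Rightarrow> bivec \<Rightarrow> real) \<Rightarrow> real set" where
  "eigvals R = {\<mu>. \<exists>X\<in>Lambda2. X \<noteq> 0 \<and> (\<forall>Y\<in>Lambda2. R X Y = \<mu> * bv_inner X Y)}"

definition lam_max :: "(bivec \<Rightarrow> bivec \<Rightarrow> real) \<Rightarrow> real" where
  "lam_max R = Max (eigvals R)"

definition lam_min :: "(bivec \<Rightarrow> bivec \<Rightarrow> real) \<Rightarrow> real" where
  "lam_min R = Min (eigvals R)"

definition oriented_orthonormal :: "(4 \<Rightarrow> vec4) \<Rightarrow> bool" where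
  "oriented_orthonormal e \<longleftrightarrow> (\<forall>i j. e i \<bullet> e j = (if i = j then 1 else 0)) \<and> det (\<chi> r. e r) > 0"

end

theory Submission
  imports Defs
begin

(*
  All computations take place in the basis Xi_1, ..., Xi_6 of Lambda^2 V built from the standard
  frame: it is orthonormal, Xi_1, Xi_2, Xi_3 span Lambda^+ and Xi_4, Xi_5, Xi_6 span Lambda^-, and
  the action of L = sum c_g Xi_g on it is explicit (act_sum_Xi): L acts on Lambda^+ through
  c_1, c_2, c_3 only and on Lambda^- through c_4, c_5, c_6 only, i.e. so(4) = so(3) + so(3).
  The Einstein condition alone (without Bianchi) makes R vanish on Lambda^+ x Lambda^-, so the mixed
  entries of LR vanish and the others are those of L_+ R_+ and L_- R_-.

  For another frame e, conjugation by the orthogonal matrix with rows e_i carries the standard Xi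
  basis to the one built from e and preserves inner product and commutators, so in an eigenbasis
  the entries -lam_b <Xi_b, L Xi_a> - lam_a <Xi_a, L Xi_b> of LR are read off the same table.  Since the Xi form a basis, the lam_a are all
  the eigenvalues of R, which gives the bound.
*)

(* keeps the index 1 of the Xi basis from being rewritten to Suc 0 *)
declare One_nat_def [simp del]

lemma matrix_mul_neg_left: "(- A) ** B = - (A ** B :: 'a::ring_1^'n^'m)"
  by (simp add: vec_eq_iff matrix_matrix_mult_def sum_negf)

lemma matrix_mul_neg_right: "A ** (- B) = - (A ** B :: 'a::ring_1^'n^'m)"
  by (simp add: vec_eq_iff matrix_matrix_mult_def sum_negf)

lemma transpose_add: "transpose (A + B) = transpose A + transpose (B :: 'a::semiring_1^'n^'m)"
  by (simp add: vec_eq_iff transpose_def)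

lemma bilinear_matrix_mult: "bilinear ((**) :: real^'n^'m \<Rightarrow> real^'p^'n \<Rightarrow> real^'p^'m)"
  unfolding bilinear_def
  by (auto intro!: linearI simp: vec_eq_iff matrix_matrix_mult_def sum.distrib
      sum_distrib_left distrib_left distrib_right mult.assoc mult.left_commute)

lemma inner_matrix_eq_trace: "A \<bullet> B = trace (transpose A ** B :: real^'n^'n)"
  unfolding inner_vec_def trace_def matrix_matrix_mult_def transpose_def
  by simp (rule sum.swap)

definition conj_by :: "real^'n^'n \<Rightarrow> real^'n^'n \<Rightarrow> real^'n^'n" where
  "conj_by Q A = transpose Q ** A ** Q"

lemma linear_conj_by: "linear (conj_by Q)"
  unfolding conj_by_def
  using bilinear_matrix_mult[unfolded bilinear_def]
  by (auto intro: linear_compose[unfolded o_def])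

lemma conj_by_mult:
  assumes "orthogonal_matrix Q"
  shows "conj_by Q A ** conj_by Q B = conj_by Q (A ** B)"
proof -
  have "conj_by Q A ** conj_by Q B = transpose Q ** A ** (Q ** transpose Q) ** B ** Q"
    unfolding conj_by_def by (simp add: matrix_mul_assoc)
  also have "\<dots> = conj_by Q (A ** B)"
    using assms unfolding orthogonal_matrix_def conj_by_def by (simp add: matrix_mul_assoc)
  finally show ?thesis .
qed

lemma conj_by_transpose_cancel:
  assumes "orthogonal_matrix Q"
  shows "conj_by Q (conj_by (transpose Q) A) = A"
proof -
  have "conj_by Q (conj_by (transpose Q) A) = (transpose Q ** Q) ** A ** (transpose Q ** Q)"
    unfolding conj_by_def by (simp add: matrix_mul_assoc)
  then show ?thesis
    using assms unfolding orthogonal_matrix_def by simp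
qed

lemma inner_conj_by:
  assumes "orthogonal_matrix Q"
  shows "conj_by Q A \<bullet> conj_by Q B = A \<bullet> B"
proof -
  have "transpose (conj_by Q A) ** conj_by Q B = conj_by Q (transpose A ** B)"
    using conj_by_mult[OF assms, of "transpose A" B]
    by (simp add: conj_by_def matrix_transpose_mul matrix_mul_assoc)
  then show ?thesis
    using assms unfolding inner_matrix_eq_trace orthogonal_matrix_def conj_by_def
    by (metis matrix_mul_assoc matrix_mul_lid trace_mul_sym)
qed

lemma bv_inner_eq_inner: "bv_inner A B = (A \<bullet> B) / 2"
  by (simp add: bv_inner_def inner_vec_def)

lemma bv_inner_commute: "bv_inner A B = bv_inner B A"
  by (simp add: bv_inner_eq_inner inner_commute)

lemma bilinear_bv_inner: "bilinear bv_inner"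
  unfolding bilinear_def bv_inner_eq_inner
  by (auto intro!: linearI simp: inner_add_left inner_add_right add_divide_distrib)

lemmas bv_inner_linear =
  bilinear_ladd[OF bilinear_bv_inner] bilinear_radd[OF bilinear_bv_inner]
  bilinear_lsub[OF bilinear_bv_inner] bilinear_rsub[OF bilinear_bv_inner]
  bilinear_lmul[OF bilinear_bv_inner] bilinear_rmul[OF bilinear_bv_inner]

lemma bv_inner_conj_by:
  "orthogonal_matrix Q \<Longrightarrow> bv_inner (conj_by Q A) (conj_by Q B) = bv_inner A B"
  by (simp add: bv_inner_eq_inner inner_conj_by)

lemma bilinear_act: "bilinear act"
  using bilinear_matrix_mult[unfolded bilinear_def]
  unfolding bilinear_def act_def by (auto intro: linear_compose_sub)

lemma act_conj_by:
  "orthogonal_matrix Q \<Longrightarrow> act (conj_by Q A) (conj_by Q B) = conj_by Q (act A B)"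
  by (simp add: act_def conj_by_mult linear_diff[OF linear_conj_by])

lemma Lambda2_iff: "A \<in> Lambda2 \<longleftrightarrow> (\<forall>i j. A $ j $ i = - A $ i $ j)"
  unfolding Lambda2_def transpose_def vec_eq_iff by auto

lemma Lambda2_entries:
  assumes "A \<in> Lambda2"
  shows "A$1$1 = 0" "A$2$2 = 0" "A$3$3 = 0" "A$4$4 = 0"
    "A$2$1 = - A$1$2" "A$3$1 = - A$1$3" "A$4$1 = - A$1$4"
    "A$3$2 = - A$2$3" "A$4$2 = - A$2$4" "A$4$3 = - A$3$4"
  using assms unfolding Lambda2_iff by (metis add.inverse_inverse neg_equal_zero)+

lemma subspace_Lambda2: "subspace Lambda2"
  unfolding subspace_def Lambda2_def
  by (auto simp: transpose_add transpose_scalar) (simp add: vec_eq_iff transpose_def)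

lemma wedge_in_Lambda2: "wedge X Y \<in> Lambda2"
  by (simp add: Lambda2_iff wedge_def)

lemma Xi_in_Lambda2: "Xi e \<alpha> \<in> Lambda2"
  unfolding Xi_def
  by (simp add: subspace_mul subspace_add subspace_diff subspace_Lambda2 wedge_in_Lambda2)

lemma transpose_act: "transpose (act L A) = act (transpose A) (transpose L)"
  unfolding act_def transpose_def vec_eq_iff by (simp add: matrix_matrix_mult_def mult.commute)

lemma act_in_Lambda2: "L \<in> Lambda2 \<Longrightarrow> A \<in> Lambda2 \<Longrightarrow> act L A \<in> Lambda2"
  unfolding Lambda2_def
  by (simp add: transpose_act, simp add: act_def matrix_mul_neg_left matrix_mul_neg_right)

lemma conj_by_in_Lambda2: "A \<in> Lambda2 \<Longrightarrow> conj_by Q A \<in> Lambda2"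
  unfolding Lambda2_def conj_by_def
  by (simp add: matrix_transpose_mul matrix_mul_assoc matrix_mul_neg_left matrix_mul_neg_right)

lemma conj_by_wedge:
  "conj_by Q (wedge X Y) = wedge (transpose Q *v X) (transpose Q *v Y)"
  by (simp add: conj_by_def vec_eq_iff matrix_matrix_mult_def transpose_def wedge_def
      matrix_vector_mult_def sum_4 algebra_simps)

lemma bilinear_form_act:
  assumes "bilinear R"
  shows "bilinear (form_act L R)"
proof -
  have act: "linear (act L)"
    using bilinear_act by (simp add: bilinear_def)
  have right: "linear (\<lambda>y. R x y)" and left: "linear (\<lambda>x. R x y)" for x y
    using assms by (simp_all add: bilinear_def)
  show ?thesis
    unfolding bilinear_def form_act_def
    by (intro conjI allI linear_compose_sub linear_compose_neg left right
        linear_compose[OF act left, unfolded o_def] linear_compose[OF act right, unfolded o_def])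
qed

section \<open>Sums of squares in orthonormal bases\<close>

lemma sum_squares_linear_basis_change:
  fixes b :: "'a::real_vector \<Rightarrow> 'a \<Rightarrow> real" and f :: "'a \<Rightarrow> real"
  assumes b: "bilinear b" "\<And>x y. b x y = b y x" and f: "linear f"
    and U_expand: "\<And>x. x \<in> U \<Longrightarrow> x = (\<Sum>k\<in>K. b x (v k) *\<^sub>R v k)"
    and v_expand: "\<And>k. k \<in> K \<Longrightarrow> v k = (\<Sum>x\<in>U. b (v k) x *\<^sub>R x)"
    and v_orthonormal: "\<And>k l. k \<in> K \<Longrightarrow> l \<in> K \<Longrightarrow> b (v k) (v l) = (if k = l then 1 else 0)"
    and "finite K"
  shows "(\<Sum>x\<in>U. (f x)\<^sup>2) = (\<Sum>k\<in>K. (f (v k))\<^sup>2)"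
proof -
  have f_U: "f x = (\<Sum>k\<in>K. b x (v k) * f (v k))" if "x \<in> U" for x
    by (subst U_expand[OF that]) (simp add: linear_sum[OF f] linear_scale[OF f] o_def)
  have b_left: "linear (\<lambda>x. b x y)" for y
    using b(1) by (simp add: bilinear_def)
  have gram: "(\<Sum>x\<in>U. b x (v k) * b x (v l)) = (if k = l then 1 else 0)"
    if "k \<in> K" "l \<in> K" for k l
  proof -
    have "b (v k) (v l) = (\<Sum>x\<in>U. b (v k) x * b x (v l))"
      by (subst v_expand[OF that(1)])
         (simp add: linear_sum[OF b_left] bilinear_lmul[OF b(1)] o_def)
    then show ?thesis
      using v_orthonormal[OF that] b(2) by simp
  qed
  have "(\<Sum>x\<in>U. (f x)\<^sup>2) = (\<Sum>x\<in>U. \<Sum>k\<in>K. \<Sum>l\<in>K. b x (v k) * b x (v l) * (f (v k) * f (v l)))"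
    by (intro sum.cong refl) (simp add: f_U power2_eq_square sum_product mult_ac)
  also have "\<dots> = (\<Sum>k\<in>K. \<Sum>l\<in>K. (\<Sum>x\<in>U. b x (v k) * b x (v l)) * (f (v k) * f (v l)))"
    by (simp add: sum.swap[of _ U] sum_distrib_right)
  also have "\<dots> = (\<Sum>k\<in>K. \<Sum>l\<in>K. if k = l then f (v k) * f (v l) else 0)"
    by (intro sum.cong refl) (simp add: gram)
  also have "\<dots> = (\<Sum>k\<in>K. (f (v k))\<^sup>2)"
    using \<open>finite K\<close> by (simp add: power2_eq_square)
  finally show ?thesis .
qed

lemma sum_squares_bilinear_basis_change:
  fixes b S :: "'a::real_vector \<Rightarrow> 'a \<Rightarrow> real"
  assumes b: "bilinear b" "\<And>x y. b x y = b y x" and S: "bilinear S"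
    and U_expand: "\<And>x. x \<in> U \<Longrightarrow> x = (\<Sum>k\<in>K. b x (v k) *\<^sub>R v k)"
    and v_expand: "\<And>k. k \<in> K \<Longrightarrow> v k = (\<Sum>x\<in>U. b (v k) x *\<^sub>R x)"
    and v_orthonormal: "\<And>k l. k \<in> K \<Longrightarrow> l \<in> K \<Longrightarrow> b (v k) (v l) = (if k = l then 1 else 0)"
    and "finite K"
  shows "(\<Sum>x\<in>U. \<Sum>y\<in>U. (S x y)\<^sup>2) = (\<Sum>k\<in>K. \<Sum>l\<in>K. (S (v k) (v l))\<^sup>2)"
proof -
  note change = sum_squares_linear_basis_change[OF b _ U_expand v_expand v_orthonormal \<open>finite K\<close>]
  have right: "linear (\<lambda>y. S x y)" and left: "linear (\<lambda>x. S x y)" for x y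
    using S by (simp_all add: bilinear_def)
  have "(\<Sum>x\<in>U. \<Sum>y\<in>U. (S x y)\<^sup>2) = (\<Sum>x\<in>U. \<Sum>l\<in>K. (S x (v l))\<^sup>2)"
    by (intro sum.cong refl change[OF right])
  also have "\<dots> = (\<Sum>l\<in>K. \<Sum>x\<in>U. (S x (v l))\<^sup>2)"
    by (rule sum.swap)
  also have "\<dots> = (\<Sum>l\<in>K. \<Sum>k\<in>K. (S (v k) (v l))\<^sup>2)"
    by (intro sum.cong refl change[OF left])
  also have "\<dots> = (\<Sum>k\<in>K. \<Sum>l\<in>K. (S (v k) (v l))\<^sup>2)"
    by (rule sum.swap)
  finally show ?thesis .
qed

abbreviation xi :: "nat \<Rightarrow> bivec" where "xi \<equiv> Xi std_e"

lemma sum_1_to_6: "(\<Sum>i\<in>{1..6::nat}. f i) = f 1 + f 2 + f 3 + f 4 + f 5 + f 6"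
proof -
  have "{1..6::nat} = {1,2,3,4,5,6}" by auto
  then show ?thesis by (simp add: add.assoc)
qed

lemma in_1_to_6: "\<alpha> \<in> {1..6} \<Longrightarrow> \<alpha> = 1 \<or> \<alpha> = 2 \<or> \<alpha> = 3 \<or> \<alpha> = 4 \<or> \<alpha> = 5 \<or> \<alpha> = (6::nat)"
  by auto

lemma bv_inner_Xi_Xi:
  "\<alpha> \<in> {1..6} \<Longrightarrow> \<beta> \<in> {1..6} \<Longrightarrow> bv_inner (xi \<alpha>) (xi \<beta>) = (if \<alpha> = \<beta> then 1 else 0)"
  by (drule in_1_to_6)+ (auto simp: bv_inner_def Xi_def sum_4 wedge_def std_e_def axis_def)

lemma Lambda2_eq_sum_Xi:
  assumes "X \<in> Lambda2"
  shows "X = (\<Sum>\<alpha>\<in>{1..6}. bv_inner X (xi \<alpha>) *\<^sub>R xi \<alpha>)"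
  using Lambda2_entries[OF assms]
  by (simp add: sum_1_to_6 Xi_def bv_inner_linear)
    (simp add: vec_eq_iff forall_4 sum_4 bv_inner_def wedge_def std_e_def axis_def field_simps)

lemma distinct_basis2: "distinct basis2"
  by (simp add: basis2_def vec_eq_iff forall_4 wedge_def std_e_def axis_def)

lemma Lambda2_eq_sum_basis2:
  assumes "X \<in> Lambda2"
  shows "X = (\<Sum>B\<in>set basis2. bv_inner X B *\<^sub>R B)"
  using Lambda2_entries[OF assms]
  by (simp add: sum.distinct_set_conv_list[OF distinct_basis2] basis2_def vec_eq_iff forall_4
      sum_4 bv_inner_def wedge_def std_e_def axis_def)

lemma sqrt2_mult_sqrt2: "sqrt 2 * (sqrt 2 * x) = 2 * x"
  by (simp flip: mult.assoc)

lemma act_sum_Xi: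
  fixes a :: "nat \<Rightarrow> real"
  defines "L \<equiv> \<Sum>\<gamma>\<in>{1..6}. a \<gamma> *\<^sub>R xi \<gamma>"
  shows "act L (xi 1) = sqrt 2 *\<^sub>R (a 3 *\<^sub>R xi 2 - a 2 *\<^sub>R xi 3)"
    and "act L (xi 2) = sqrt 2 *\<^sub>R (a 1 *\<^sub>R xi 3 - a 3 *\<^sub>R xi 1)"
    and "act L (xi 3) = sqrt 2 *\<^sub>R (a 2 *\<^sub>R xi 1 - a 1 *\<^sub>R xi 2)"
    and "act L (xi 4) = sqrt 2 *\<^sub>R (a 5 *\<^sub>R xi 6 - a 6 *\<^sub>R xi 5)"
    and "act L (xi 5) = sqrt 2 *\<^sub>R (a 6 *\<^sub>R xi 4 - a 4 *\<^sub>R xi 6)"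
    and "act L (xi 6) = sqrt 2 *\<^sub>R (a 4 *\<^sub>R xi 5 - a 5 *\<^sub>R xi 4)"
  unfolding L_def sum_1_to_6
  by (simp_all add: Xi_def bilinear_ladd[OF bilinear_act] bilinear_lmul[OF bilinear_act]
      bilinear_rmul[OF bilinear_act] algebra_simps)
    (simp_all add: vec_eq_iff forall_4 act_def matrix_matrix_mult_def sum_4 wedge_def
      std_e_def axis_def algebra_simps)

section \<open>The Levi-Civita symbol and the Hodge star\<close>

(*
  Numerals of type 4 are residues mod 4, so 4 = 0 is the least element in the order of the type.
  idx4 supplies the order 1 < 2 < 3 < 4, in which the oriented antisymmetry rules levi_sort let the
  simplifier sort the indices of levi until levi_1234 or levi_repeated applies.
*)
definition idx4 :: "4 \<Rightarrow> nat" where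
  "idx4 i = (if i = 1 then 1 else if i = 2 then 2 else if i = 3 then 3 else 4)"

definition levi_rows :: "4 \<Rightarrow> 4 \<Rightarrow> 4 \<Rightarrow> 4 \<Rightarrow> 4 \<Rightarrow> 4" where
  "levi_rows i j k l r = (if r = 1 then i else if r = 2 then j else if r = 3 then k else l)"

lemma levi_eq_det: "levi i j k l = det (\<chi> r. std_e (levi_rows i j k l r))"
  unfolding levi_def levi_rows_def by simp

lemma levi_permute:
  assumes "p permutes (UNIV::4 set)" "\<And>r. levi_rows i' j' k' l' r = levi_rows i j k l (p r)"
  shows "levi i' j' k' l' = of_int (sign p) * levi i j k l"
proof -
  have "(\<chi> r. std_e (levi_rows i' j' k' l' r)) = (\<chi> r. (\<chi> r. std_e (levi_rows i j k l r)) $ p r)"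
    using assms(2) by (simp add: vec_eq_iff)
  then show ?thesis
    unfolding levi_eq_det using det_permute_rows[OF assms(1)] by (simp only:)
qed

lemma levi_antisym:
  "levi j i k l = - levi i j k l" "levi i k j l = - levi i j k l" "levi i j l k = - levi i j k l"
proof -
  have 4: "\<And>r::4. r \<noteq> 1 \<Longrightarrow> r \<noteq> 2 \<Longrightarrow> r \<noteq> 3 \<Longrightarrow> r = 4" using exhaust_4 by blast
  have "levi j i k l = of_int (sign (Transposition.transpose (1::4) 2)) * levi i j k l"
       "levi i k j l = of_int (sign (Transposition.transpose (2::4) 3)) * levi i j k l"
       "levi i j l k = of_int (sign (Transposition.transpose (3::4) 4)) * levi i j k l"
    by (rule levi_permute; auto simp: permutes_swap_id levi_rows_def Transposition.transpose_def dest: 4)+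
  then show "levi j i k l = - levi i j k l" "levi i k j l = - levi i j k l" "levi i j l k = - levi i j k l"
    by (simp_all add: sign_swap_id)
qed

lemma levi_sort:
  "idx4 j < idx4 i \<Longrightarrow> levi i j k l = - levi j i k l"
  "idx4 k < idx4 j \<Longrightarrow> levi i j k l = - levi i k j l"
  "idx4 l < idx4 k \<Longrightarrow> levi i j k l = - levi i j l k"
  by (rule levi_antisym)+

lemma levi_repeated:
  "levi i i k l = 0" "levi i j i l = 0" "levi i j k i = 0"
  "levi i j j l = 0" "levi i j k j = 0" "levi i j k k = 0"
  unfolding levi_eq_det
  by (rule det_identical_rows[of 1 2] det_identical_rows[of 1 3] det_identical_rows[of 1 4]
        det_identical_rows[of 2 3] det_identical_rows[of 2 4] det_identical_rows[of 3 4];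
      simp add: row_def levi_rows_def)+

lemma levi_1234: "levi 1 2 3 4 = 1"
proof -
  have "(\<chi> r. std_e (levi_rows 1 2 3 4 r)) = mat 1"
    by (simp add: vec_eq_iff forall_4 levi_rows_def std_e_def mat_def axis_def)
  then show ?thesis
    unfolding levi_eq_det by simp
qed

lemma hodge_Xi:
  "hodge (xi 1) = xi 1" "hodge (xi 2) = xi 2" "hodge (xi 3) = xi 3"
  "hodge (xi 4) = - xi 4" "hodge (xi 5) = - xi 5" "hodge (xi 6) = - xi 6"
  by (simp_all add: vec_eq_iff forall_4 hodge_def sum_4 levi_sort levi_repeated levi_1234 idx4_def
      Xi_def wedge_def std_e_def axis_def)

lemma linear_hodge: "linear hodge"
  by (auto intro!: linearI simp: hodge_def vec_eq_iff sum.distrib sum_distrib_left algebra_simps)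

lemma linear_projP: "linear projP" and linear_projM: "linear projM"
  unfolding projP_def projM_def
  by (auto intro!: linearI simp: linear_add[OF linear_hodge] linear_scale[OF linear_hodge]
      scaleR_add_right scaleR_diff_right)

lemma projP_Xi:
  "projP (xi 1) = xi 1" "projP (xi 2) = xi 2" "projP (xi 3) = xi 3"
  "projP (xi 4) = 0" "projP (xi 5) = 0" "projP (xi 6) = 0"
  and projM_Xi:
  "projM (xi 1) = 0" "projM (xi 2) = 0" "projM (xi 3) = 0"
  "projM (xi 4) = xi 4" "projM (xi 5) = xi 5" "projM (xi 6) = xi 6"
  by (simp_all add: projP_def projM_def hodge_Xi flip: scaleR_2)

lemma projP_sum_Xi:
  "projP (\<Sum>\<alpha>\<in>{1..6}. c \<alpha> *\<^sub>R xi \<alpha>) = (\<Sum>\<alpha>\<in>{1..6}. (if \<alpha> \<le> 3 then c \<alpha> else 0) *\<^sub>R xi \<alpha>)"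
  and projM_sum_Xi:
  "projM (\<Sum>\<alpha>\<in>{1..6}. c \<alpha> *\<^sub>R xi \<alpha>) = (\<Sum>\<alpha>\<in>{1..6}. (if \<alpha> \<le> 3 then 0 else c \<alpha>) *\<^sub>R xi \<alpha>)"
  unfolding sum_1_to_6
  by (simp_all add: linear_add[OF linear_projP] linear_scale[OF linear_projP] projP_Xi
      linear_add[OF linear_projM] linear_scale[OF linear_projM] projM_Xi)

lemma Xi_eq_conj_by: "Xi e \<alpha> = conj_by (\<chi> r. e r) (xi \<alpha>)"
proof -
  have "transpose (\<chi> r. e r) *v std_e k = e k" for k
    using exhaust_4[of k]
    by (auto simp: vec_eq_iff transpose_def matrix_vector_mult_def sum_4 std_e_def axis_def)
  then show ?thesis
    unfolding Xi_def
    by (simp add: linear_add[OF linear_conj_by] linear_diff[OF linear_conj_by]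
        linear_scale[OF linear_conj_by] conj_by_wedge)
qed

lemma orthogonal_matrix_frame:
  assumes "oriented_orthonormal e"
  shows "orthogonal_matrix (\<chi> r. e r)"
proof -
  have "(\<chi> r. e r) ** transpose (\<chi> r. e r) = mat 1"
    using assms unfolding oriented_orthonormal_def
    by (simp add: vec_eq_iff transpose_def matrix_matrix_mult_def mat_def inner_vec_def)
  then show ?thesis
    unfolding orthogonal_matrix_def using matrix_left_right_inverse by blast
qed

lemma orthogonal_matrix_std_frame: "orthogonal_matrix (\<chi> r. std_e r)"
proof -
  have "(\<chi> r. std_e r) = mat 1"
    by (simp add: vec_eq_iff std_e_def mat_def axis_def)
  then show ?thesis
    by (simp add: orthogonal_matrix_id)
qed

lemma bv_inner_Xi_Xi_frame:
  "orthogonal_matrix (\<chi> r. e r) \<Longrightarrow> \<alpha> \<in> {1..6} \<Longrightarrow> \<beta> \<in> {1..6} \<Longrightarrow>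
    bv_inner (Xi e \<alpha>) (Xi e \<beta>) = (if \<alpha> = \<beta> then 1 else 0)"
  by (simp add: Xi_eq_conj_by[of e] bv_inner_conj_by bv_inner_Xi_Xi)

lemma Lambda2_eq_sum_Xi_frame:
  assumes Q: "orthogonal_matrix (\<chi> r. e r)" and X: "X \<in> Lambda2"
  shows "X = (\<Sum>\<alpha>\<in>{1..6}. bv_inner X (Xi e \<alpha>) *\<^sub>R Xi e \<alpha>)"
proof -
  let ?Q = "\<chi> r. e r"
  define Y where "Y = conj_by (transpose ?Q) X"
  have X_eq: "X = conj_by ?Q Y"
    unfolding Y_def using conj_by_transpose_cancel[OF Q] by simp
  have coeff: "bv_inner Y (xi \<alpha>) = bv_inner X (Xi e \<alpha>)" for \<alpha>
    unfolding X_eq Xi_eq_conj_by[of e] bv_inner_conj_by[OF Q] ..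
  have "X = conj_by ?Q (\<Sum>\<alpha>\<in>{1..6}. bv_inner Y (xi \<alpha>) *\<^sub>R xi \<alpha>)"
    using X_eq Lambda2_eq_sum_Xi[OF conj_by_in_Lambda2[OF X]] unfolding Y_def by metis
  then show ?thesis
    by (simp add: coeff linear_sum[OF linear_conj_by] linear_scale[OF linear_conj_by] o_def
        flip: Xi_eq_conj_by)
qed

lemma form_normsq_basis2_eq_sum_Xi:
  assumes "orthogonal_matrix (\<chi> r. e r)" "bilinear S"
  shows "form_normsq basis2 S = (\<Sum>\<alpha>\<in>{1..6}. \<Sum>\<beta>\<in>{1..6}. (S (Xi e \<alpha>) (Xi e \<beta>))\<^sup>2)"
proof -
  have "form_normsq basis2 S = (\<Sum>x\<in>set basis2. \<Sum>y\<in>set basis2. (S x y)\<^sup>2)"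
    by (simp add: form_normsq_def sum.distinct_set_conv_list[OF distinct_basis2])
  also have "\<dots> = (\<Sum>\<alpha>\<in>{1..6}. \<Sum>\<beta>\<in>{1..6}. (S (Xi e \<alpha>) (Xi e \<beta>))\<^sup>2)"
  proof (rule sum_squares_bilinear_basis_change[OF bilinear_bv_inner bv_inner_commute assms(2)])
    show "x = (\<Sum>\<alpha>\<in>{1..6}. bv_inner x (Xi e \<alpha>) *\<^sub>R Xi e \<alpha>)" if "x \<in> set basis2" for x
      using that by (intro Lambda2_eq_sum_Xi_frame[OF assms(1)]) (auto simp: basis2_def wedge_in_Lambda2)
    show "Xi e \<alpha> = (\<Sum>x\<in>set basis2. bv_inner (Xi e \<alpha>) x *\<^sub>R x)" for \<alpha>
      by (rule Lambda2_eq_sum_basis2[OF Xi_in_Lambda2])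
  qed (simp_all add: bv_inner_Xi_Xi_frame[OF assms(1)])
  finally show ?thesis .
qed

section \<open>The Einstein condition\<close>

lemma Einstein_Xi_cross:
  assumes R: "bilinear R" "\<And>A B. R A B = R B A" and "Einstein R"
    and "\<alpha> \<in> {1,2,3}" "\<beta> \<in> {4,5,6}"
  shows "R (xi \<alpha>) (xi \<beta>) = 0"
proof -
  let ?w = "\<lambda>i j. wedge (std_e i) (std_e j)"
  obtain c where c: "\<And>Y W. Ric R Y W = c * (Y \<bullet> W)"
    using \<open>Einstein R\<close> unfolding Einstein_def by blast
  have w_swap: "?w 2 1 = - ?w 1 2" "?w 3 1 = - ?w 1 3" "?w 4 1 = - ?w 1 4"
      "?w 3 2 = - ?w 2 3" "?w 4 2 = - ?w 2 4" "?w 4 3 = - ?w 3 4"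
    and w_self: "?w i i = 0" for i
    by (simp_all add: wedge_def vec_eq_iff)
  note R_linear = bilinear_ladd[OF R(1)] bilinear_radd[OF R(1)] bilinear_lsub[OF R(1)]
    bilinear_rsub[OF R(1)] bilinear_lmul[OF R(1)] bilinear_rmul[OF R(1)]
    bilinear_lneg[OF R(1)] bilinear_rneg[OF R(1)] bilinear_lzero[OF R(1)] bilinear_rzero[OF R(1)]
  have "(\<Sum>k\<in>UNIV. R (?w i k) (?w j k)) = (if i = j then c else 0)" for i j
    using c[of "std_e i" "std_e j"]
    by (simp add: Ric_def Rm_def std_e_def inner_axis_axis)
  note ric = this[unfolded sum_4]
  have Einstein_eqs:
       "R (?w 1 2) (?w 1 2) + R (?w 1 3) (?w 1 3) + R (?w 1 4) (?w 1 4) = c"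
       "R (?w 1 2) (?w 1 2) + R (?w 2 3) (?w 2 3) + R (?w 2 4) (?w 2 4) = c"
       "R (?w 1 3) (?w 1 3) + R (?w 2 3) (?w 2 3) + R (?w 3 4) (?w 3 4) = c"
       "R (?w 1 4) (?w 1 4) + R (?w 2 4) (?w 2 4) + R (?w 3 4) (?w 3 4) = c"
       "R (?w 1 3) (?w 2 3) + R (?w 1 4) (?w 2 4) = 0"
       "R (?w 1 2) (?w 2 3) = R (?w 1 4) (?w 3 4)"
       "R (?w 1 2) (?w 2 4) + R (?w 1 3) (?w 3 4) = 0"
       "R (?w 1 2) (?w 1 3) + R (?w 2 4) (?w 3 4) = 0"
       "R (?w 1 2) (?w 1 4) = R (?w 2 3) (?w 3 4)"
       "R (?w 1 3) (?w 1 4) + R (?w 2 3) (?w 2 4) = 0"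
    using ric[of 1 1] ric[of 2 2] ric[of 3 3] ric[of 4 4] ric[of 1 2] ric[of 1 3] ric[of 1 4]
      ric[of 2 3] ric[of 2 4] ric[of 3 4]
    by (simp_all add: w_swap w_self R_linear)
  have "\<alpha> = 1 \<or> \<alpha> = 2 \<or> \<alpha> = 3" "\<beta> = 4 \<or> \<beta> = 5 \<or> \<beta> = 6"
    using assms(4,5) by auto
  then show ?thesis
    by (elim disjE) (simp_all add: Xi_def R_linear R(2) divide_simps,
        (use Einstein_eqs[simplified R(2)] in linarith)+)
qed

lemma norm_form_act_split:
  assumes R: "bilinear R" "\<And>A B. R A B = R B A" "Einstein R" and L: "L \<in> Lambda2"
  shows "form_normsq basis2 (form_act L R) =
    form_normsq basisP (form_act (projP L) R) + form_normsq basisM (form_act (projM L) R)"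
proof -
  define c where "c \<alpha> = bv_inner L (xi \<alpha>)" for \<alpha>
  have L_eq: "L = (\<Sum>\<alpha>\<in>{1..6}. c \<alpha> *\<^sub>R xi \<alpha>)"
    unfolding c_def by (rule Lambda2_eq_sum_Xi[OF L])
  note act_L = act_sum_Xi[of c, folded L_eq]
  note act_P = act_sum_Xi[of "\<lambda>\<alpha>. if \<alpha> \<le> 3 then c \<alpha> else 0", folded projP_sum_Xi L_eq]
  note act_M = act_sum_Xi[of "\<lambda>\<alpha>. if \<alpha> \<le> 3 then 0 else c \<alpha>", folded projM_sum_Xi L_eq]
  note R_linear = bilinear_ladd[OF R(1)] bilinear_radd[OF R(1)] bilinear_lsub[OF R(1)]
    bilinear_rsub[OF R(1)] bilinear_lmul[OF R(1)] bilinear_rmul[OF R(1)]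
  have R_cross: "R (xi \<alpha>) (xi \<beta>) = 0" "R (xi \<beta>) (xi \<alpha>) = 0"
    if "\<alpha> \<in> {1,2,3}" "\<beta> \<in> {4,5,6}" for \<alpha> \<beta>
    using Einstein_Xi_cross[OF R that] R(2) by metis+
  have cross: "form_act L R (xi \<alpha>) (xi \<beta>) = 0" "form_act L R (xi \<beta>) (xi \<alpha>) = 0"
    if "\<alpha> \<in> {1,2,3}" "\<beta> \<in> {4,5,6}" for \<alpha> \<beta>
    using that by (auto simp: form_act_def act_L R_linear R_cross)
  have plus: "form_act (projP L) R (xi \<alpha>) (xi \<beta>) = form_act L R (xi \<alpha>) (xi \<beta>)"
    if "\<alpha> \<in> {1,2,3}" "\<beta> \<in> {1,2,3}" for \<alpha> \<beta>
    using that by (auto simp: form_act_def act_L act_P)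
  have minus: "form_act (projM L) R (xi \<alpha>) (xi \<beta>) = form_act L R (xi \<alpha>) (xi \<beta>)"
    if "\<alpha> \<in> {4,5,6}" "\<beta> \<in> {4,5,6}" for \<alpha> \<beta>
    using that by (auto simp: form_act_def act_L act_M)
  have "form_normsq basis2 (form_act L R) = (\<Sum>\<alpha>\<in>{1..6}. \<Sum>\<beta>\<in>{1..6}. (form_act L R (xi \<alpha>) (xi \<beta>))\<^sup>2)"
    by (rule form_normsq_basis2_eq_sum_Xi[OF orthogonal_matrix_std_frame bilinear_form_act[OF R(1)]])
  then show ?thesis
    by (simp add: sum_1_to_6 form_normsq_def basisP_def basisM_def cross plus minus)
qed

section \<open>Eigenbases\<close>

lemma form_normsq_act_eigenbasis:
  fixes a lam :: "nat \<Rightarrow> real"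
  assumes R: "bilinear R" "\<And>A B. R A B = R B A" and e: "orthogonal_matrix (\<chi> r. e r)"
    and eig: "\<And>\<alpha> X. \<alpha> \<in> {1..6} \<Longrightarrow> X \<in> Lambda2 \<Longrightarrow> R (Xi e \<alpha>) X = lam \<alpha> * bv_inner (Xi e \<alpha>) X"
  shows "form_normsq basis2 (form_act (\<Sum>\<alpha>=1..6. a \<alpha> *\<^sub>R Xi e \<alpha>) R) =
    4 * (  (a 1)^2 * (lam 2 - lam 3)^2 + (a 2)^2 * (lam 1 - lam 3)^2
         + (a 3)^2 * (lam 1 - lam 2)^2 + (a 4)^2 * (lam 5 - lam 6)^2
         + (a 5)^2 * (lam 4 - lam 6)^2 + (a 6)^2 * (lam 4 - lam 5)^2)"
proof -
  let ?Q = "\<chi> r. e r"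
  define L where "L = (\<Sum>\<alpha>\<in>{1..6}. a \<alpha> *\<^sub>R xi \<alpha>)"
  have L_conj: "(\<Sum>\<alpha>=1..6. a \<alpha> *\<^sub>R Xi e \<alpha>) = conj_by ?Q L"
    by (simp add: L_def Xi_eq_conj_by[of e] linear_sum[OF linear_conj_by]
        linear_scale[OF linear_conj_by] o_def)
  have "L \<in> Lambda2"
    unfolding L_def by (intro subspace_sum subspace_mul subspace_Lambda2 Xi_in_Lambda2)
  then have act_in: "act (conj_by ?Q L) (Xi e \<alpha>) \<in> Lambda2" for \<alpha>
    by (intro act_in_Lambda2 conj_by_in_Lambda2 Xi_in_Lambda2)
  have transport: "bv_inner (Xi e \<beta>) (act (conj_by ?Q L) (Xi e \<alpha>)) = bv_inner (xi \<beta>) (act L (xi \<alpha>))"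
    for \<alpha> \<beta>
    by (simp add: Xi_eq_conj_by[of e] act_conj_by[OF e] bv_inner_conj_by[OF e])
  have entry: "form_act (conj_by ?Q L) R (Xi e \<alpha>) (Xi e \<beta>) =
      - lam \<beta> * bv_inner (xi \<beta>) (act L (xi \<alpha>)) - lam \<alpha> * bv_inner (xi \<alpha>) (act L (xi \<beta>))"
    if "\<alpha> \<in> {1..6}" "\<beta> \<in> {1..6}" for \<alpha> \<beta>
    using eig[OF that(1) act_in] eig[OF that(2) act_in] R(2)
    by (simp add: form_act_def transport)
  have "form_normsq basis2 (form_act (conj_by ?Q L) R) =
      (\<Sum>\<alpha>\<in>{1..6}. \<Sum>\<beta>\<in>{1..6}. (form_act (conj_by ?Q L) R (Xi e \<alpha>) (Xi e \<beta>))\<^sup>2)"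
    by (rule form_normsq_basis2_eq_sum_Xi[OF e bilinear_form_act[OF R(1)]])
  then show ?thesis
    unfolding L_conj
    by (simp add: sum_1_to_6 entry act_sum_Xi[of a, folded L_def] bv_inner_linear bv_inner_Xi_Xi)
      (simp add: power2_eq_square algebra_simps sqrt2_mult_sqrt2)
qed

lemma eigvals_eq_image:
  assumes R_sym: "\<And>A B. R A B = R B A" and e: "orthogonal_matrix (\<chi> r. e r)"
    and eig: "\<And>\<alpha> X. \<alpha> \<in> {1..6} \<Longrightarrow> X \<in> Lambda2 \<Longrightarrow> R (Xi e \<alpha>) X = lam \<alpha> * bv_inner (Xi e \<alpha>) X"
  shows "eigvals R = lam ` {1..6}"
proof (intro subset_antisym subsetI)
  fix \<mu> assume "\<mu> \<in> eigvals R"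
  then obtain X where X: "X \<in> Lambda2" "X \<noteq> 0" and XY: "\<And>Y. Y \<in> Lambda2 \<Longrightarrow> R X Y = \<mu> * bv_inner X Y"
    unfolding eigvals_def by blast
  show "\<mu> \<in> lam ` {1..6}"
  proof (rule ccontr)
    assume \<mu>: "\<mu> \<notin> lam ` {1..6}"
    have "bv_inner X (Xi e \<alpha>) = 0" if "\<alpha> \<in> {1..6}" for \<alpha>
    proof -
      have "\<mu> * bv_inner X (Xi e \<alpha>) = lam \<alpha> * bv_inner X (Xi e \<alpha>)"
        using XY[OF Xi_in_Lambda2] eig[OF that X(1)] R_sym bv_inner_commute by metis
      moreover have "\<mu> \<noteq> lam \<alpha>"
        using \<mu> that by blast
      ultimately show ?thesis
        by simp
    qed
    then have "X = 0"
      using Lambda2_eq_sum_Xi_frame[OF e X(1)] by simp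
    with X(2) show False ..
  qed
next
  fix \<mu> assume "\<mu> \<in> lam ` {1..6}"
  then obtain \<alpha> where \<alpha>: "\<alpha> \<in> {1..6}" and "\<mu> = lam \<alpha>"
    by blast
  moreover have "Xi e \<alpha> \<noteq> 0"
    using bv_inner_Xi_Xi_frame[OF e \<alpha> \<alpha>] by (auto simp: bv_inner_def)
  ultimately show "\<mu> \<in> eigvals R"
    unfolding eigvals_def using eig Xi_in_Lambda2 by blast
qed

lemma eigenvalue_diff_le_spread:
  assumes "finite (eigvals R)" "\<mu> \<in> eigvals R" "\<nu> \<in> eigvals R"
  shows "(\<mu> - \<nu>)\<^sup>2 \<le> (lam_max R - lam_min R)\<^sup>2"
proof -
  have "lam_min R \<le> \<mu>" "\<mu> \<le> lam_max R" "lam_min R \<le> \<nu>" "\<nu> \<le> lam_max R"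
    using assms unfolding lam_min_def lam_max_def by (simp_all add: Min_le Max_ge)
  then have "\<bar>\<mu> - \<nu>\<bar> \<le> lam_max R - lam_min R"
    unfolding abs_le_iff by linarith
  then show ?thesis
    using power_mono[OF _ abs_ge_zero, of _ "lam_max R - lam_min R" 2] by simp
qed

lemma form_normsq_act_eigenbasis_le:
  fixes a lam :: "nat \<Rightarrow> real"
  assumes R_sym: "\<And>A B. R A B = R B A" and e: "orthogonal_matrix (\<chi> r. e r)"
    and eig: "\<And>\<alpha> X. \<alpha> \<in> {1..6} \<Longrightarrow> X \<in> Lambda2 \<Longrightarrow> R (Xi e \<alpha>) X = lam \<alpha> * bv_inner (Xi e \<alpha>) X"
  defines "L \<equiv> \<Sum>\<alpha>=1..6. a \<alpha> *\<^sub>R Xi e \<alpha>"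
  shows "4 * (  (a 1)^2 * (lam 2 - lam 3)^2 + (a 2)^2 * (lam 1 - lam 3)^2
              + (a 3)^2 * (lam 1 - lam 2)^2 + (a 4)^2 * (lam 5 - lam 6)^2
              + (a 5)^2 * (lam 4 - lam 6)^2 + (a 6)^2 * (lam 4 - lam 5)^2)
    \<le> 4 * (lam_max R - lam_min R)^2 * bv_inner L L"
proof -
  define D where "D = (lam_max R - lam_min R)\<^sup>2"
  have spectrum: "eigvals R = lam ` {1..6}"
    by (rule eigvals_eq_image[OF R_sym e eig])
  have gap: "(a \<gamma>)\<^sup>2 * (lam \<alpha> - lam \<beta>)\<^sup>2 \<le> (a \<gamma>)\<^sup>2 * D"
    if "\<alpha> \<in> {1..6}" "\<beta> \<in> {1..6}" for \<alpha> \<beta> \<gamma>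
    unfolding D_def using that
    by (intro mult_left_mono eigenvalue_diff_le_spread) (simp_all add: spectrum)
  have "bv_inner L L = (a 1)\<^sup>2 + (a 2)\<^sup>2 + (a 3)\<^sup>2 + (a 4)\<^sup>2 + (a 5)\<^sup>2 + (a 6)\<^sup>2"
    by (simp add: L_def sum_1_to_6 bv_inner_linear bv_inner_Xi_Xi_frame[OF e] power2_eq_square)
  then have "4 * D * bv_inner L L =
      4 * ((a 1)\<^sup>2 * D + (a 2)\<^sup>2 * D + (a 3)\<^sup>2 * D + (a 4)\<^sup>2 * D + (a 5)\<^sup>2 * D + (a 6)\<^sup>2 * D)"
    by (simp add: algebra_simps)
  then show ?thesis
    using gap[of 2 3 1] gap[of 1 3 2] gap[of 1 2 3] gap[of 5 6 4] gap[of 4 6 5] gap[of 4 5 6]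
    unfolding D_def by simp
qed

theorem proposition2p6:
  fixes R :: "bivec \<Rightarrow> bivec \<Rightarrow> real"
  assumes "SymB R" and "Einstein R"
  shows "(\<forall>L\<in>Lambda2. form_normsq basis2 (form_act L R) =
            form_normsq basisP (form_act (projP L) R) + form_normsq basisM (form_act (projM L) R))
     \<and> (\<forall>(e :: 4 \<Rightarrow> vec4) (lam :: nat \<Rightarrow> real) (a :: nat \<Rightarrow> real).
          oriented_orthonormal e \<longrightarrow>
          (\<forall>\<alpha>\<in>{1..6}. \<forall>X\<in>Lambda2. R (Xi e \<alpha>) X = lam \<alpha> * bv_inner (Xi e \<alpha>) X) \<longrightarrow>
          (let L = (\<Sum>\<alpha>=1..6. a \<alpha> *\<^sub>R Xi e \<alpha>);
               s = 4 * (  (a 1)^2 * (lam 2 - lam 3)^2 + (a 2)^2 * (lam 1 - lam 3)^2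
                        + (a 3)^2 * (lam 1 - lam 2)^2 + (a 4)^2 * (lam 5 - lam 6)^2
                        + (a 5)^2 * (lam 4 - lam 6)^2 + (a 6)^2 * (lam 4 - lam 5)^2)
           in form_normsq basis2 (form_act L R) = s
              \<and> s \<le> 4 * (lam_max R - lam_min R)^2 * bv_inner L L))"
proof -
  have R: "bilinear R" "\<And>A B. R A B = R B A"
    using assms(1) unfolding SymB_def by auto
  show ?thesis
  proof (intro conjI ballI allI impI, goal_cases)
    case (1 L)
    then show ?case
      by (rule norm_form_act_split[OF R assms(2)])
  next
    case (2 e lam a)
    then have e: "orthogonal_matrix (\<chi> r. e r)"
      and eig: "\<And>\<alpha> X. \<alpha> \<in> {1..6} \<Longrightarrow> X \<in> Lambda2 \<Longrightarrow> R (Xi e \<alpha>) X = lam \<alpha> * bv_inner (Xi e \<alpha>) X"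
      by (simp_all add: orthogonal_matrix_frame)
    show ?case
      unfolding Let_def
      using form_normsq_act_eigenbasis[OF R e eig] form_normsq_act_eigenbasis_le[OF R(2) e eig]
      by simp
  qed
qed

end
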